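(* Let $G$ be a simple cubic graph and $(G',r)$ be constructed from $G$ as described in the context. A set $S\subseteq V(G')$ is a vector connectivity set for $(G',r)$ if and only if for every edge $e=xy$ of $G$, $S$ contains at least one vertex from each of the sets $X_e=\{x,w_{x,e},z_{x,e}\}$, $Z_e=\{z_{x,e},w_e,z_{y,e}\}$ and $Y_e=\{z_{y,e},w_{y,e},y\}$.
   Context: Construction of $G'$ from a cubic graph $G$: start with $G$. (1) For each edge $e=xy$ of $G$, delete $xy$, add three new vertices $w_{x,e},w_e,w_{y,e}$ and the edges $xw_{x,e}, w_{x,e}w_e, w_ew_{y,e}, w_{y,e}y$. (2) For each edge $e=xy$ of $G$, add two new vertices $z_{x,e},z_{y,e}$ and the edges $w_{x,e}z_{x,e}, z_{x,e}w_e, w_ez_{y,e}, z_{y,e}w_{y,e}$. (3) For every vertex $x$ of $G$ with incident edges $e,f,g$, add the edges $w_{x,e}w_{x,f}, w_{x,e}w_{x,g}, w_{x,f}w_{x,g}$. Requirements: for every edge $e=xy$ of $G$, $r(w_{x,e})=r(w_{y,e})=4$ and $r(w_e)=3$; $r(v')=0$ for all other vertices of $G'$. For $S\subseteq V(G')$ and $v\in V(G')\setminus S$, a $v$--$S$ fan of order $k$ is a collection of $k$ paths, each connecting $v$ to a vertex of $S$, pairwise vertex-disjoint except at $v$; $v$ is $k$-linked to $S$ if such a fan exists. A vector connectivity set for $(G',r)$ is a set $S$ such that every $v\in V(G')\setminus S$ is $r(v)$-linked to $S$. *)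

theory Defs
  imports Main
begin

definition is_path :: "'v set \<Rightarrow> ('v \<Rightarrow> 'v \<Rightarrow> bool) \<Rightarrow> 'v list \<Rightarrow> bool" where
  "is_path W A p \<longleftrightarrow> p \<noteq> [] \<and> distinct p \<and> set p \<subseteq> W \<and> successively A p"

definition has_fan :: "'v set \<Rightarrow> ('v \<Rightarrow> 'v \<Rightarrow> bool) \<Rightarrow> 'v \<Rightarrow> 'v set \<Rightarrow> nat \<Rightarrow> bool" where
  "has_fan W A v S k \<longleftrightarrow>
     (\<exists>P :: nat \<Rightarrow> 'v list.
        (\<forall>i<k. is_path W A (P i) \<and> hd (P i) = v \<and> last (P i) \<in> S) \<and>
        (\<forall>i<k. \<forall>j<k. i \<noteq> j \<longrightarrow> set (P i) \<inter> set (P j) = {v}))"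

abbreviation k_linked :: "'v set \<Rightarrow> ('v \<Rightarrow> 'v \<Rightarrow> bool) \<Rightarrow> 'v \<Rightarrow> nat \<Rightarrow> 'v set \<Rightarrow> bool" where
  "k_linked W A v k S \<equiv> has_fan W A v S k"

definition vc_set :: "'v set \<Rightarrow> ('v \<Rightarrow> 'v \<Rightarrow> bool) \<Rightarrow> ('v \<Rightarrow> nat) \<Rightarrow> 'v set \<Rightarrow> bool" where
  "vc_set W A r S \<longleftrightarrow> S \<subseteq> W \<and> (\<forall>v \<in> W - S. k_linked W A v (r v) S)"

definition cubic_graph :: "'a set \<Rightarrow> ('a \<Rightarrow> 'a \<Rightarrow> bool) \<Rightarrow> bool" where
  "cubic_graph V adj \<longleftrightarrow> finite V \<and>
     (\<forall>x y. adj x y \<longrightarrow> x \<in> V \<and> y \<in> V \<and> x \<noteq> y \<and> adj y x) \<and>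
     (\<forall>x \<in> V. card {y. adj x y} = 3)"

definition gedges :: "('a \<Rightarrow> 'a \<Rightarrow> bool) \<Rightarrow> 'a set set" where
  "gedges adj = {{x, y} | x y. adj x y}"

text \<open>Vertices of G': Orig x = x; WX x e = w_{x,e}; WE e = w_e; ZX x e = z_{x,e}.\<close>

datatype 'a gvert = Orig 'a | WX 'a "'a set" | WE "'a set" | ZX 'a "'a set"

definition gp_verts :: "'a set \<Rightarrow> ('a \<Rightarrow> 'a \<Rightarrow> bool) \<Rightarrow> 'a gvert set" where
  "gp_verts V adj = Orig ` V
     \<union> {WX x e | x e. e \<in> gedges adj \<and> x \<in> e}
     \<union> {WE e | e. e \<in> gedges adj}
     \<union> {ZX x e | x e. e \<in> gedges adj \<and> x \<in> e}"

text \<open>One orientation of each edge of G' (steps (1)--(3)); the edge xy of G itself is deleted.\<close>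

definition gp_edge0 :: "('a \<Rightarrow> 'a \<Rightarrow> bool) \<Rightarrow> 'a gvert \<Rightarrow> 'a gvert \<Rightarrow> bool" where
  "gp_edge0 adj u v \<longleftrightarrow>
     (\<exists>x e. e \<in> gedges adj \<and> x \<in> e \<and>
        ((u = Orig x \<and> v = WX x e) \<or>
         (u = WX x e \<and> v = WE e) \<or>
         (u = WX x e \<and> v = ZX x e) \<or>
         (u = ZX x e \<and> v = WE e))) \<or>
     (\<exists>x e f. e \<in> gedges adj \<and> f \<in> gedges adj \<and> x \<in> e \<and> x \<in> f \<and> e \<noteq> f \<and>
        u = WX x e \<and> v = WX x f)"

definition gp_adj :: "('a \<Rightarrow> 'a \<Rightarrow> bool) \<Rightarrow> 'a gvert \<Rightarrow> 'a gvert \<Rightarrow> bool" where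
  "gp_adj adj u v \<longleftrightarrow> gp_edge0 adj u v \<or> gp_edge0 adj v u"

fun gp_req :: "'a gvert \<Rightarrow> nat" where
  "gp_req (WX x e) = 4"
| "gp_req (WE e) = 3"
| "gp_req (Orig x) = 0"
| "gp_req (ZX x e) = 0"

end

theory Submission
  imports Defs
begin

text \<open>
  Necessity is the easy direction of Menger's theorem: if \<open>S\<close> misses \<open>X\<^sub>e\<close>, every path from
  \<open>w\<^sub>x\<^sub>,\<^sub>e\<close> into \<open>S\<close> meets \<open>w\<^sub>e\<close> or one of the two other vertices \<open>w\<^sub>x\<^sub>,\<^sub>f\<close>, so there is no fan
  of order 4; if \<open>S\<close> misses \<open>Z\<^sub>e\<close>, every path from \<open>w\<^sub>e\<close> into \<open>S\<close> meets \<open>w\<^sub>x\<^sub>,\<^sub>e\<close> or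
  \<open>w\<^sub>y\<^sub>,\<^sub>e\<close>, so there is no fan of order 3.
  For sufficiency, each triple met by \<open>S\<close> gives a path into \<open>S\<close> inside a small region: from
  \<open>w\<^sub>x\<^sub>,\<^sub>e\<close> inside \<open>X\<^sub>e\<close>, from \<open>w\<^sub>e\<close> inside \<open>Z\<^sub>e\<close> or \<open>{w\<^sub>e} \<union> Y\<^sub>e\<close>, from \<open>w\<^sub>x\<^sub>,\<^sub>f\<close> inside
  \<open>{w\<^sub>x\<^sub>,\<^sub>f} \<union> Z\<^sub>f\<close>. For \<open>w\<^sub>x\<^sub>,\<^sub>e\<close>, the regions of the two other edges \<open>f, g\<close> at \<open>x\<close>, a one-step
  path to \<open>x\<close> or \<open>z\<^sub>x\<^sub>,\<^sub>e\<close>, and a path through \<open>w\<^sub>e\<close> form four disjoint branches; for \<open>w\<^sub>e\<close>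
  with \<open>z\<^sub>x\<^sub>,\<^sub>e \<in> S\<close>, the branches are \<open>z\<^sub>x\<^sub>,\<^sub>e\<close>, \<open>Y\<^sub>e\<close>, and \<open>w\<^sub>x\<^sub>,\<^sub>e\<close> followed by the region of
  another edge at \<open>x\<close>.
\<close>

definition reaches_within :: "'v set \<Rightarrow> ('v \<Rightarrow> 'v \<Rightarrow> bool) \<Rightarrow> 'v set \<Rightarrow> 'v \<Rightarrow> 'v set \<Rightarrow> bool" where
  "reaches_within W A S a B \<longleftrightarrow> (\<exists>q. is_path W A q \<and> hd q = a \<and> last q \<in> S \<and> set q \<subseteq> B)"

lemma reaches_within_self: "a \<in> S \<Longrightarrow> a \<in> W \<Longrightarrow> reaches_within W A S a {a}"
  unfolding reaches_within_def is_path_def by (intro exI[of _ "[a]"]) auto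

lemma reaches_within_Cons:
  assumes "A a b" "a \<in> W" "reaches_within W A S b B" "a \<notin> B"
  shows "reaches_within W A S a (insert a B)"
proof -
  obtain q where q: "is_path W A q" "hd q = b" "last q \<in> S" "set q \<subseteq> B"
    using assms(3) unfolding reaches_within_def by blast
  have "q \<noteq> []"
    using q(1) unfolding is_path_def by simp
  then have "is_path W A (a # q)"
    using q assms(1,2,4) unfolding is_path_def by (cases q) auto
  then show ?thesis
    using q \<open>q \<noteq> []\<close> unfolding reaches_within_def by (intro exI[of _ "a # q"]) auto
qed

lemma reaches_within_edge:
  "A a b \<Longrightarrow> a \<in> W \<Longrightarrow> b \<in> S \<Longrightarrow> b \<in> W \<Longrightarrow> a \<noteq> b \<Longrightarrow> reaches_within W A S a {a, b}"
  by (rule reaches_within_Cons[OF _ _ reaches_within_self]) auto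

lemma reaches_within_mono: "reaches_within W A S a B \<Longrightarrow> B \<subseteq> B' \<Longrightarrow> reaches_within W A S a B'"
  unfolding reaches_within_def by blast

lemma has_fan_0: "has_fan W A v S 0"
  by (simp add: has_fan_def)

lemma has_fanI:
  assumes v: "v \<in> W"
    and branches: "\<forall>(a, B) \<in> set bs. A v a \<and> reaches_within W A S a B \<and> v \<notin> B"
    and disjoint: "sorted_wrt disjnt (map snd bs)"
  shows "has_fan W A v S (length bs)"
proof -
  have "\<forall>i<length bs. \<exists>q. is_path W A q \<and> hd q = fst (bs ! i) \<and> last q \<in> S \<and> set q \<subseteq> snd (bs ! i)"
    using branches nth_mem unfolding reaches_within_def by fastforce
  then obtain Q where Q: "\<And>i. i < length bs \<Longrightarrow> is_path W A (Q i) \<and> hd (Q i) = fst (bs ! i) \<and>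
      last (Q i) \<in> S \<and> set (Q i) \<subseteq> snd (bs ! i)"
    by metis
  have disj: "set (Q i) \<inter> set (Q j) = {}" if "i < length bs" "j < length bs" "i \<noteq> j" for i j
  proof -
    have "disjnt (snd (bs ! i)) (snd (bs ! j))"
      using disjoint that sorted_wrt_iff_nth_less[of disjnt "map snd bs"]
      by (metis disjnt_sym length_map linorder_neq_iff nth_map)
    then show ?thesis
      using Q that by (meson disjnt_def disjnt_subset1 disjnt_subset2)
  qed
  have paths: "is_path W A (v # Q i) \<and> hd (v # Q i) = v \<and> last (v # Q i) \<in> S"
    if i: "i < length bs" for i
  proof -
    have "A v (fst (bs ! i)) \<and> v \<notin> snd (bs ! i)"
      using branches nth_mem[OF i] by (cases "bs ! i") auto
    then have "A v (hd (Q i))" "v \<notin> set (Q i)" "Q i \<noteq> []"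
      using Q[OF i] unfolding is_path_def by auto
    then show ?thesis
      using Q[OF i] v unfolding is_path_def by (cases "Q i") auto
  qed
  have "set (v # Q i) \<inter> set (v # Q j) = {v}"
    if "i < length bs" "j < length bs" "i \<noteq> j" for i j
    using disj[OF that] by auto
  with paths show ?thesis
    unfolding has_fan_def by (intro exI[of _ "\<lambda>i. v # Q i"]) simp
qed

lemma has_fan_le_card_separator:
  assumes fan: "has_fan W A v S k" and T: "finite T" "v \<notin> T"
    and separates: "\<And>p. is_path W A p \<Longrightarrow> hd p = v \<Longrightarrow> last p \<in> S \<Longrightarrow> set p \<inter> T \<noteq> {}"
  shows "k \<le> card T"
proof -
  obtain P where P: "\<forall>i<k. is_path W A (P i) \<and> hd (P i) = v \<and> last (P i) \<in> S"
    "\<forall>i<k. \<forall>j<k. i \<noteq> j \<longrightarrow> set (P i) \<inter> set (P j) = {v}"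
    using fan unfolding has_fan_def by blast
  have "\<forall>i<k. \<exists>z. z \<in> set (P i) \<inter> T"
    using separates P(1) by blast
  then obtain t where t: "\<And>i. i < k \<Longrightarrow> t i \<in> set (P i) \<inter> T"
    by metis
  have "inj_on t {..<k}"
  proof (rule inj_onI)
    fix i j assume "i \<in> {..<k}" "j \<in> {..<k}" "t i = t j"
    then show "i = j"
      using t P(2) T(2) by (metis IntD1 IntD2 IntI lessThan_iff singletonD)
  qed
  moreover have "t ` {..<k} \<subseteq> T"
    using t by auto
  ultimately show ?thesis
    using card_inj_on_le[of t "{..<k}" T] T(1) by simp
qed

lemma path_leaving:
  assumes "is_path W A p" "hd p = v" "last p \<in> S" "v \<notin> S"
  obtains b rest where "p = v # b # rest" "A v b"
    "b \<notin> S \<Longrightarrow> \<exists>c rest'. rest = c # rest' \<and> A b c \<and> c \<noteq> v"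
proof -
  obtain b rest where p: "p = v # b # rest"
    using assms unfolding is_path_def by (cases p; cases "tl p") auto
  have "A v b"
    using assms(1) unfolding p is_path_def by simp
  moreover have "\<exists>c rest'. rest = c # rest' \<and> A b c \<and> c \<noteq> v" if "b \<notin> S"
  proof (cases rest)
    case Nil
    then show ?thesis using assms(3) that p by simp
  next
    case (Cons c rest')
    then show ?thesis using assms(1) unfolding p is_path_def by auto
  qed
  ultimately show ?thesis
    using that p by blast
qed

lemma cubic_graph_adjD:
  assumes "cubic_graph V adj" "adj x y"
  shows "x \<in> V" "y \<in> V" "x \<noteq> y" "adj y x"
  using assms unfolding cubic_graph_def by blast+

lemma cubic_graph_neighbours:
  assumes G: "cubic_graph V adj" and xy: "adj x y"
  obtains u v where "{z. adj x z} = {y, u, v}" "distinct [x, y, u, v]"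
proof -
  let ?N = "{z. adj x z}"
  have card: "card ?N = 3"
    using G cubic_graph_adjD(1)[OF G xy] unfolding cubic_graph_def by blast
  then have "finite ?N"
    using card.infinite by fastforce
  then have "card (?N - {y}) = 2"
    using card xy by simp
  then obtain u v where uv: "?N - {y} = {u, v}" "u \<noteq> v"
    by (auto simp: card_2_iff)
  then have N: "?N = {y, u, v}"
    using xy by blast
  moreover have "distinct [x, y, u, v]"
    using N uv cubic_graph_adjD(3)[OF G] by auto
  ultimately show ?thesis
    using that by blast
qed

lemma edge_in_gedges: "adj x y \<Longrightarrow> {x, y} \<in> gedges adj"
  unfolding gedges_def by blast

lemma gedges_at_vertex:
  assumes "cubic_graph V adj" "f \<in> gedges adj" "x \<in> f"
  obtains w where "adj x w" "f = {x, w}"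
  using assms cubic_graph_adjD(4)[OF assms(1)] unfolding gedges_def by blast

lemma gedges_endpoint_in_verts: "cubic_graph V adj \<Longrightarrow> e \<in> gedges adj \<Longrightarrow> x \<in> e \<Longrightarrow> x \<in> V"
  by (metis gedges_at_vertex cubic_graph_adjD(1))

lemma gp_verts_iff [simp]:
  "Orig x \<in> gp_verts V adj \<longleftrightarrow> x \<in> V"
  "WX x e \<in> gp_verts V adj \<longleftrightarrow> e \<in> gedges adj \<and> x \<in> e"
  "WE e \<in> gp_verts V adj \<longleftrightarrow> e \<in> gedges adj"
  "ZX x e \<in> gp_verts V adj \<longleftrightarrow> e \<in> gedges adj \<and> x \<in> e"
  unfolding gp_verts_def by blast+

lemma gp_adj_iff:
  "gp_adj adj (Orig x) v \<longleftrightarrow> (\<exists>e. v = WX x e \<and> e \<in> gedges adj \<and> x \<in> e)"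
  "gp_adj adj (WX x e) v \<longleftrightarrow> e \<in> gedges adj \<and> x \<in> e \<and>
     (v = Orig x \<or> v = WE e \<or> v = ZX x e \<or> (\<exists>f. v = WX x f \<and> f \<in> gedges adj \<and> x \<in> f \<and> f \<noteq> e))"
  "gp_adj adj (WE e) v \<longleftrightarrow> e \<in> gedges adj \<and> (\<exists>z\<in>e. v = WX z e \<or> v = ZX z e)"
  "gp_adj adj (ZX x e) v \<longleftrightarrow> e \<in> gedges adj \<and> x \<in> e \<and> (v = WX x e \<or> v = WE e)"
  unfolding gp_adj_def gp_edge0_def by auto

text \<open>\<open>end_triple x e\<close> is \<open>X\<^sub>e\<close> (or \<open>Y\<^sub>e\<close> at the other end of \<open>e\<close>) and \<open>mid_triple e\<close> is \<open>Z\<^sub>e\<close>.\<close>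

definition end_triple :: "'a \<Rightarrow> 'a set \<Rightarrow> 'a gvert set" where
  "end_triple x e = {Orig x, WX x e, ZX x e}"

definition mid_triple :: "'a set \<Rightarrow> 'a gvert set" where
  "mid_triple e = insert (WE e) ((\<lambda>z. ZX z e) ` e)"

definition meets_triples :: "'a gvert set \<Rightarrow> ('a \<Rightarrow> 'a \<Rightarrow> bool) \<Rightarrow> bool" where
  "meets_triples S adj \<longleftrightarrow>
     (\<forall>e \<in> gedges adj. S \<inter> mid_triple e \<noteq> {} \<and> (\<forall>x \<in> e. S \<inter> end_triple x e \<noteq> {}))"

lemma meets_triples_iff:
  "meets_triples S adj \<longleftrightarrow>
    (\<forall>x y. adj x y \<longrightarrow>
       S \<inter> {Orig x, WX x {x, y}, ZX x {x, y}} \<noteq> {} \<and>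
       S \<inter> {ZX x {x, y}, WE {x, y}, ZX y {x, y}} \<noteq> {} \<and>
       S \<inter> {ZX y {x, y}, WX y {x, y}, Orig y} \<noteq> {})"
  unfolding meets_triples_def gedges_def end_triple_def mid_triple_def by blast

lemma has_fan_WX_meets_end_triple:
  assumes G: "cubic_graph V adj" and e: "e \<in> gedges adj" "x \<in> e"
    and fan: "has_fan (gp_verts V adj) (gp_adj adj) (WX x e) S 4"
  shows "S \<inter> end_triple x e \<noteq> {}"
proof
  assume miss: "S \<inter> end_triple x e = {}"
  obtain y where xy: "adj x y" and e_eq: "e = {x, y}"
    using gedges_at_vertex[OF G e] .
  obtain u v where N: "{z. adj x z} = {y, u, v}" and dist: "distinct [x, y, u, v]"
    using cubic_graph_neighbours[OF G xy] .
  define T where "T = {WE e, WX x {x, u}, WX x {x, v}}"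
  have other_edge: "WX x f \<in> T" if f: "f \<in> gedges adj" "x \<in> f" "f \<noteq> e" for f
  proof -
    obtain w where "adj x w" "f = {x, w}"
      using gedges_at_vertex[OF G f(1,2)] .
    then show ?thesis
      using N f(3) e_eq unfolding T_def by auto
  qed
  have "4 \<le> card T"
  proof (rule has_fan_le_card_separator[OF fan])
    show "finite T" unfolding T_def by simp
    show "WX x e \<notin> T"
      using dist unfolding T_def e_eq by (auto simp: doubleton_eq_iff)
    fix p assume p: "is_path (gp_verts V adj) (gp_adj adj) p" "hd p = WX x e" "last p \<in> S"
    have "WX x e \<notin> S" "Orig x \<notin> S" "ZX x e \<notin> S"
      using miss unfolding end_triple_def by auto
    then obtain b rest where b: "p = WX x e # b # rest" "gp_adj adj (WX x e) b"
      "b \<notin> S \<Longrightarrow> \<exists>c rest'. rest = c # rest' \<and> gp_adj adj b c \<and> c \<noteq> WX x e"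
      using path_leaving[OF p] by metis
    from b(2) show "set p \<inter> T \<noteq> {}"
      unfolding gp_adj_iff
    proof (elim conjE disjE exE)
      assume "b = Orig x"
      then obtain c rest' where c: "rest = c # rest'" "gp_adj adj (Orig x) c" "c \<noteq> WX x e"
        using b(3) \<open>Orig x \<notin> S\<close> by blast
      then obtain f where "c = WX x f" "f \<in> gedges adj" "x \<in> f" "f \<noteq> e"
        by (auto simp: gp_adj_iff)
      then show ?thesis
        using b(1) c(1) other_edge by auto
    next
      assume "b = ZX x e"
      then have "WE e \<in> set p"
        using b(1,3) \<open>ZX x e \<notin> S\<close> by (auto simp: gp_adj_iff)
      then show ?thesis
        unfolding T_def by blast
    qed (use b(1) other_edge in \<open>auto simp: T_def\<close>)
  qed
  moreover have "card T \<le> 3"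
    unfolding T_def by (rule card_insert_le_m1) (auto intro: card_insert_le_m1)
  ultimately show False
    by simp
qed

lemma has_fan_WE_meets_mid_triple:
  assumes e: "e \<in> gedges adj"
    and fan: "has_fan (gp_verts V adj) (gp_adj adj) (WE e) S 3"
  shows "S \<inter> mid_triple e \<noteq> {}"
proof
  assume miss: "S \<inter> mid_triple e = {}"
  obtain x y where e_eq: "e = {x, y}"
    using e unfolding gedges_def by blast
  define T where "T = (\<lambda>z. WX z e) ` e"
  have "3 \<le> card T"
  proof (rule has_fan_le_card_separator[OF fan])
    show "finite T" "WE e \<notin> T" unfolding T_def e_eq by auto
    fix p assume p: "is_path (gp_verts V adj) (gp_adj adj) p" "hd p = WE e" "last p \<in> S"
    have "WE e \<notin> S" "\<And>z. z \<in> e \<Longrightarrow> ZX z e \<notin> S"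
      using miss unfolding mid_triple_def by auto
    then obtain b rest where b: "p = WE e # b # rest" "gp_adj adj (WE e) b"
      "b \<notin> S \<Longrightarrow> \<exists>c rest'. rest = c # rest' \<and> gp_adj adj b c \<and> c \<noteq> WE e"
      using path_leaving[OF p] by metis
    then obtain z where z: "z \<in> e" "b = WX z e \<or> b = ZX z e"
      by (auto simp: gp_adj_iff)
    then have "WX z e \<in> set p"
      using b(1,3) \<open>\<And>z. z \<in> e \<Longrightarrow> ZX z e \<notin> S\<close> by (auto simp: gp_adj_iff)
    then show "set p \<inter> T \<noteq> {}"
      using z(1) unfolding T_def by blast
  qed
  moreover have "card T \<le> 2"
    unfolding T_def e_eq by (auto intro: card_insert_le_m1)
  ultimately show False
    by simp
qed

lemma vc_set_imp_meets_triples: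
  assumes G: "cubic_graph V adj" and vc: "vc_set (gp_verts V adj) (gp_adj adj) gp_req S"
  shows "meets_triples S adj"
  unfolding meets_triples_def
proof (intro ballI conjI)
  have fan: "has_fan (gp_verts V adj) (gp_adj adj) v S (gp_req v)"
    if "v \<in> gp_verts V adj" "v \<notin> S" for v
    using vc that unfolding vc_set_def by blast
  fix e assume e: "e \<in> gedges adj"
  show "S \<inter> mid_triple e \<noteq> {}"
  proof (cases "WE e \<in> S")
    case False
    then have "has_fan (gp_verts V adj) (gp_adj adj) (WE e) S 3"
      using fan[of "WE e"] e by simp
    then show ?thesis
      by (rule has_fan_WE_meets_mid_triple[OF e])
  qed (simp add: mid_triple_def)
  fix x assume x: "x \<in> e"
  show "S \<inter> end_triple x e \<noteq> {}"
  proof (cases "WX x e \<in> S")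
    case False
    then have "has_fan (gp_verts V adj) (gp_adj adj) (WX x e) S 4"
      using fan[of "WX x e"] e x by simp
    then show ?thesis
      by (rule has_fan_WX_meets_end_triple[OF G e x])
  qed (simp add: end_triple_def)
qed

context
  fixes V :: "'a set" and adj :: "'a \<Rightarrow> 'a \<Rightarrow> bool" and S :: "'a gvert set"
  assumes G: "cubic_graph V adj" and meets: "meets_triples S adj"
begin

abbreviation reaches :: "'a gvert \<Rightarrow> 'a gvert set \<Rightarrow> bool" where
  "reaches \<equiv> reaches_within (gp_verts V adj) (gp_adj adj) S"

lemma reaches_end_triple:
  assumes e: "e \<in> gedges adj" "x \<in> e"
  shows "reaches (WX x e) (end_triple x e)"
proof -
  have "x \<in> V"
    using gedges_endpoint_in_verts[OF G e] .
  from meets e consider "WX x e \<in> S" | "ZX x e \<in> S" | "Orig x \<in> S"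
    unfolding meets_triples_def end_triple_def by blast
  then show ?thesis
  proof cases
    case 1
    then show ?thesis
      using e by (intro reaches_within_mono[OF reaches_within_self]) (auto simp: end_triple_def)
  next
    case 2
    then have "reaches (WX x e) {WX x e, ZX x e}"
      using e by (intro reaches_within_edge) (auto simp: gp_adj_iff)
    then show ?thesis
      by (rule reaches_within_mono) (auto simp: end_triple_def)
  next
    case 3
    then have "reaches (WX x e) {WX x e, Orig x}"
      using e \<open>x \<in> V\<close> by (intro reaches_within_edge) (auto simp: gp_adj_iff)
    then show ?thesis
      by (rule reaches_within_mono) (auto simp: end_triple_def)
  qed
qed

lemma reaches_mid_triple:
  assumes e: "e \<in> gedges adj"
  shows "reaches (WE e) (mid_triple e)"
proof (cases "WE e \<in> S")
  case True
  then show ?thesis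
    using e by (intro reaches_within_mono[OF reaches_within_self]) (auto simp: mid_triple_def)
next
  case False
  then obtain z where z: "z \<in> e" "ZX z e \<in> S"
    using meets e unfolding meets_triples_def mid_triple_def by blast
  have "reaches (WE e) {WE e, ZX z e}"
    using e z by (intro reaches_within_edge) (auto simp: gp_adj_iff)
  then show ?thesis
    by (rule reaches_within_mono) (use z in \<open>auto simp: mid_triple_def\<close>)
qed

lemma reaches_WX_mid_triple:
  assumes e: "e \<in> gedges adj" "x \<in> e"
  shows "reaches (WX x e) (insert (WX x e) (mid_triple e))"
  using e by (intro reaches_within_Cons[OF _ _ reaches_mid_triple]) (auto simp: gp_adj_iff mid_triple_def)

lemma reaches_WE_end_triple:
  assumes e: "e \<in> gedges adj" "y \<in> e"
  shows "reaches (WE e) (insert (WE e) (end_triple y e))"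
  using e by (intro reaches_within_Cons[OF _ _ reaches_end_triple]) (auto simp: gp_adj_iff end_triple_def)

lemma has_fan_WX:
  assumes e: "e \<in> gedges adj" "x \<in> e" and nS: "WX x e \<notin> S"
  shows "has_fan (gp_verts V adj) (gp_adj adj) (WX x e) S 4"
proof -
  obtain y where xy: "adj x y" and e_eq: "e = {x, y}"
    using gedges_at_vertex[OF G e] .
  obtain u v where N: "{z. adj x z} = {y, u, v}" and dist: "distinct [x, y, u, v]"
    using cubic_graph_neighbours[OF G xy] .
  define f g where "f = {x, u}" and "g = {x, v}"
  have fg: "f \<in> gedges adj" "x \<in> f" "g \<in> gedges adj" "x \<in> g"
    using N edge_in_gedges[of adj x] unfolding f_def g_def by auto
  have ne: "f \<noteq> e" "g \<noteq> e" "f \<noteq> g" "x \<noteq> y"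
    using dist unfolding f_def g_def e_eq by (auto simp: doubleton_eq_iff)
  have y: "y \<in> e" "x \<in> V"
    using e_eq gedges_endpoint_in_verts[OF G e] by auto
  note branches = reaches_WX_mid_triple[OF fg(1,2)] reaches_WX_mid_triple[OF fg(3,4)]
  from meets e nS consider "Orig x \<in> S" | "ZX x e \<in> S"
    unfolding meets_triples_def end_triple_def by blast
  then show ?thesis
  proof cases
    case 1
    have "has_fan (gp_verts V adj) (gp_adj adj) (WX x e) S (length
      [(WX x f, insert (WX x f) (mid_triple f)), (WX x g, insert (WX x g) (mid_triple g)),
       (Orig x, {Orig x}), (WE e, mid_triple e)])"
      using e fg ne y 1 branches reaches_mid_triple[OF e(1)]
      by (intro has_fanI) (auto simp: gp_adj_iff mid_triple_def disjnt_def reaches_within_self)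
    then show ?thesis
      by (simp add: numeral_eq_Suc)
  next
    case 2
    have "has_fan (gp_verts V adj) (gp_adj adj) (WX x e) S (length
      [(WX x f, insert (WX x f) (mid_triple f)), (WX x g, insert (WX x g) (mid_triple g)),
       (ZX x e, {ZX x e}), (WE e, insert (WE e) (end_triple y e))])"
      using e fg ne y 2 branches reaches_WE_end_triple[OF e(1) y(1)]
      by (intro has_fanI) (auto simp: gp_adj_iff mid_triple_def disjnt_def end_triple_def reaches_within_self)
    then show ?thesis
      by (simp add: numeral_eq_Suc)
  qed
qed

lemma has_fan_WE:
  assumes e: "e \<in> gedges adj" and nS: "WE e \<notin> S"
  shows "has_fan (gp_verts V adj) (gp_adj adj) (WE e) S 3"
proof -
  obtain x where x: "x \<in> e" "ZX x e \<in> S"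
    using meets e nS unfolding meets_triples_def mid_triple_def by blast
  obtain y where xy: "adj x y" and e_eq: "e = {x, y}"
    using gedges_at_vertex[OF G e x(1)] .
  obtain u v where N: "{z. adj x z} = {y, u, v}" and dist: "distinct [x, y, u, v]"
    using cubic_graph_neighbours[OF G xy] .
  define f where "f = {x, u}"
  have f: "f \<in> gedges adj" "x \<in> f" "f \<noteq> e"
    using N dist edge_in_gedges[of adj x u] unfolding f_def e_eq by (auto simp: doubleton_eq_iff)
  have y: "y \<in> e" "x \<noteq> y"
    using e_eq dist by auto
  have "reaches (WX x e) (insert (WX x e) (insert (WX x f) (mid_triple f)))"
    using e x f by (intro reaches_within_Cons[OF _ _ reaches_WX_mid_triple])
      (auto simp: gp_adj_iff mid_triple_def)
  then have "has_fan (gp_verts V adj) (gp_adj adj) (WE e) S (length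
    [(ZX x e, {ZX x e}), (WX y e, end_triple y e),
     (WX x e, insert (WX x e) (insert (WX x f) (mid_triple f)))])"
    using e x f y reaches_end_triple[OF e y(1)]
    by (intro has_fanI) (auto simp: gp_adj_iff mid_triple_def end_triple_def disjnt_def reaches_within_self)
  then show ?thesis
    by (simp add: numeral_eq_Suc)
qed

lemma meets_triples_imp_vc_set:
  assumes "S \<subseteq> gp_verts V adj"
  shows "vc_set (gp_verts V adj) (gp_adj adj) gp_req S"
  unfolding vc_set_def
proof (intro conjI ballI)
  fix w assume w: "w \<in> gp_verts V adj - S"
  then show "has_fan (gp_verts V adj) (gp_adj adj) w S (gp_req w)"
    by (cases w) (auto simp: has_fan_0 has_fan_WX has_fan_WE)
qed (rule assms)

end

theorem mainTheorem4:
  fixes V :: "'a set" and adj :: "'a \<Rightarrow> 'a \<Rightarrow> bool" and S :: "'a gvert set"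
  assumes "cubic_graph V adj"
    and "S \<subseteq> gp_verts V adj"
  shows "vc_set (gp_verts V adj) (gp_adj adj) gp_req S \<longleftrightarrow>
    (\<forall>x y. adj x y \<longrightarrow>
       S \<inter> {Orig x, WX x {x, y}, ZX x {x, y}} \<noteq> {} \<and>
       S \<inter> {ZX x {x, y}, WE {x, y}, ZX y {x, y}} \<noteq> {} \<and>
       S \<inter> {ZX y {x, y}, WX y {x, y}, Orig y} \<noteq> {})"
  unfolding meets_triples_iff[symmetric]
  using vc_set_imp_meets_triples[OF assms(1)] meets_triples_imp_vc_set[OF assms(1) _ assms(2)]
  by blast

end
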